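(* Let $\Theta$ be the class of all connected graphs $G$ with $\mathrm{ldim}_f(G)=\frac{|V(G)|}{2}$. If $G_1,G_2\in\Theta$, then the join $G_1+G_2$ belongs to $\Theta$.
   Context: All graphs are finite, simple and connected; $d(x,y)$ is the shortest-path distance. For an edge $uv$, $L(uv)=\{x\in V(G): d(u,x)\neq d(v,x)\}$. A function $f:V(G)\to[0,1]$ is a local resolving function of $G$ if $\sum_{x\in L(uv)}f(x)\geq 1$ for every edge $uv$; $\mathrm{ldim}_f(G)$ is the minimum of $\sum_{v\in V(G)}f(v)$ over all local resolving functions. The join $G_1+G_2$ is the disjoint union of $G_1$ and $G_2$ together with all edges joining a vertex of $G_1$ to a vertex of $G_2$. *)

theory Defs
  imports Complex_Main
begin

definition simple_graph :: "'a set \<Rightarrow> 'a set set \<Rightarrow> bool" where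
  "simple_graph V E \<longleftrightarrow> finite V \<and> V \<noteq> {} \<and>
     (\<forall>e\<in>E. \<exists>u v. u \<noteq> v \<and> u \<in> V \<and> v \<in> V \<and> e = {u, v})"

definition is_walk :: "'a set \<Rightarrow> 'a set set \<Rightarrow> 'a list \<Rightarrow> bool" where
  "is_walk V E xs \<longleftrightarrow> xs \<noteq> [] \<and> set xs \<subseteq> V \<and>
     (\<forall>i. Suc i < length xs \<longrightarrow> {xs ! i, xs ! Suc i} \<in> E)"

definition connected_graph :: "'a set \<Rightarrow> 'a set set \<Rightarrow> bool" where
  "connected_graph V E \<longleftrightarrow> simple_graph V E \<and>
     (\<forall>u\<in>V. \<forall>v\<in>V. \<exists>xs. is_walk V E xs \<and> hd xs = u \<and> last xs = v)"

definition gdist :: "'a set \<Rightarrow> 'a set set \<Rightarrow> 'a \<Rightarrow> 'a \<Rightarrow> nat" where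
  "gdist V E u v = (LEAST n. \<exists>xs. is_walk V E xs \<and> hd xs = u \<and> last xs = v \<and> length xs = Suc n)"

definition Lset :: "'a set \<Rightarrow> 'a set set \<Rightarrow> 'a \<Rightarrow> 'a \<Rightarrow> 'a set" where
  "Lset V E u v = {x \<in> V. gdist V E u x \<noteq> gdist V E v x}"

definition local_resolving_function :: "'a set \<Rightarrow> 'a set set \<Rightarrow> ('a \<Rightarrow> real) \<Rightarrow> bool" where
  "local_resolving_function V E f \<longleftrightarrow>
     (\<forall>x\<in>V. 0 \<le> f x \<and> f x \<le> 1) \<and>
     (\<forall>u v. {u, v} \<in> E \<longrightarrow> (\<Sum>x\<in>Lset V E u v. f x) \<ge> 1)"

text \<open>Fractional local metric dimension: the minimum (= infimum, attained)
  of the total weight over all local resolving functions.\<close>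
definition ldim_f :: "'a set \<Rightarrow> 'a set set \<Rightarrow> real" where
  "ldim_f V E = Inf {(\<Sum>v\<in>V. f v) | f. local_resolving_function V E f}"

definition in_Theta :: "'a set \<Rightarrow> 'a set set \<Rightarrow> bool" where
  "in_Theta V E \<longleftrightarrow> connected_graph V E \<and> ldim_f V E = real (card V) / 2"

definition join_V :: "'a set \<Rightarrow> 'b set \<Rightarrow> ('a + 'b) set" where
  "join_V V1 V2 = Inl ` V1 \<union> Inr ` V2"

definition join_E :: "'a set \<Rightarrow> 'a set set \<Rightarrow> 'b set \<Rightarrow> 'b set set \<Rightarrow> ('a + 'b) set set" where
  "join_E V1 E1 V2 E2 = (image Inl ` E1) \<union> (image Inr ` E2) \<union>
     {{Inl a, Inr b} | a b. a \<in> V1 \<and> b \<in> V2}"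

end

theory Submission
  imports Defs
begin

text \<open>The constant function \<open>1/2\<close> is always a local resolving function, since both ends of an
  edge \<open>uv\<close> lie in \<open>L(uv)\<close>; so \<open>ldim\<^sub>f(G) = |V(G)|/2\<close> says exactly that every local resolving
  function has weight at least \<open>|V(G)|/2\<close>. The join has diameter at most two, so there distances
  are determined by adjacency: for an edge \<open>uv\<close> of \<open>G\<^sub>1\<close>, every vertex of \<open>G\<^sub>2\<close> is adjacent to
  both \<open>u\<close> and \<open>v\<close>, and a vertex of \<open>G\<^sub>1\<close> separating \<open>u\<close> and \<open>v\<close> in the join is adjacent to
  exactly one of them, hence separates them in \<open>G\<^sub>1\<close> too. Therefore a local resolving function of
  \<open>G\<^sub>1 + G\<^sub>2\<close> restricts to local resolving functions of \<open>G\<^sub>1\<close> and \<open>G\<^sub>2\<close>, and its weight is at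
  least \<open>|V(G\<^sub>1)|/2 + |V(G\<^sub>2)|/2\<close>.\<close>

lemma is_walk_singleton_iff: "is_walk V E [a] \<longleftrightarrow> a \<in> V"
  unfolding is_walk_def by auto

lemma is_walk_pair_iff: "is_walk V E [a, b] \<longleftrightarrow> a \<in> V \<and> b \<in> V \<and> {a, b} \<in> E"
  unfolding is_walk_def by (auto simp: less_Suc_eq)

lemma is_walk_triple_iff:
  "is_walk V E [a, b, c] \<longleftrightarrow> a \<in> V \<and> b \<in> V \<and> c \<in> V \<and> {a, b} \<in> E \<and> {b, c} \<in> E"
  unfolding is_walk_def by (auto simp: less_Suc_eq)

lemma simple_graph_edgeD:
  assumes "simple_graph V E" "{u, v} \<in> E"
  shows "u \<noteq> v" "u \<in> V" "v \<in> V"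
  using assms unfolding simple_graph_def by (auto simp: doubleton_eq_iff)

lemma connected_graph_finite: "connected_graph V E \<Longrightarrow> finite V"
  unfolding connected_graph_def simple_graph_def by blast

lemma gdist_le_walk_length:
  assumes "is_walk V E xs" "hd xs = u" "last xs = v"
  shows "gdist V E u v \<le> length xs - 1"
  unfolding gdist_def
proof (rule Least_le)
  have "xs \<noteq> []" using assms(1) unfolding is_walk_def by simp
  then show "\<exists>ys. is_walk V E ys \<and> hd ys = u \<and> last ys = v \<and> length ys = Suc (length xs - 1)"
    using assms by auto
qed

lemma gdist_attained:
  assumes "connected_graph V E" "u \<in> V" "v \<in> V"
  obtains xs where "is_walk V E xs" "hd xs = u" "last xs = v" "length xs = Suc (gdist V E u v)"
proof -
  obtain xs where xs: "is_walk V E xs" "hd xs = u" "last xs = v"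
    using assms unfolding connected_graph_def by blast
  then have "xs \<noteq> []" unfolding is_walk_def by simp
  with xs have "\<exists>n xs. is_walk V E xs \<and> hd xs = u \<and> last xs = v \<and> length xs = Suc n"
    by (intro exI[of _ "length xs - 1"] exI[of _ xs]) auto
  then have "\<exists>xs. is_walk V E xs \<and> hd xs = u \<and> last xs = v \<and> length xs = Suc (gdist V E u v)"
    unfolding gdist_def by (rule LeastI_ex)
  then show thesis using that by blast
qed

lemma gdist_eq_0_iff:
  assumes "connected_graph V E" "u \<in> V" "v \<in> V"
  shows "gdist V E u v = 0 \<longleftrightarrow> u = v"
proof
  assume "gdist V E u v = 0"
  moreover obtain xs where "hd xs = u" "last xs = v" "length xs = Suc (gdist V E u v)"
    using gdist_attained[OF assms] by metis
  ultimately show "u = v" by (cases xs) auto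
next
  assume "u = v"
  then show "gdist V E u v = 0"
    using gdist_le_walk_length[of V E "[u]" u v] assms(2) by (simp add: is_walk_singleton_iff)
qed

lemma gdist_eq_1_iff:
  assumes "connected_graph V E" "u \<in> V" "v \<in> V" "u \<noteq> v"
  shows "gdist V E u v = 1 \<longleftrightarrow> {u, v} \<in> E"
proof
  assume "gdist V E u v = 1"
  moreover obtain xs where "is_walk V E xs" "hd xs = u" "last xs = v"
    "length xs = Suc (gdist V E u v)"
    using gdist_attained[OF assms(1-3)] by metis
  ultimately show "{u, v} \<in> E"
    by (cases xs; cases "tl xs") (auto simp: is_walk_pair_iff)
next
  assume "{u, v} \<in> E"
  then have "gdist V E u v \<le> 1"
    using gdist_le_walk_length[of V E "[u, v]" u v] assms by (simp add: is_walk_pair_iff)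
  then show "gdist V E u v = 1" using gdist_eq_0_iff[OF assms(1-3)] assms(4) by simp
qed

definition adjacency_separators :: "'a set \<Rightarrow> 'a set set \<Rightarrow> 'a \<Rightarrow> 'a \<Rightarrow> 'a set" where
  "adjacency_separators V E u v =
     {x \<in> V. x = u \<or> x = v \<or> ({u, x} \<in> E \<longleftrightarrow> {v, x} \<notin> E)}"

lemma adjacency_separators_subset_Lset:
  assumes G: "connected_graph V E" and uv: "u \<in> V" "v \<in> V" "u \<noteq> v"
  shows "adjacency_separators V E u v \<subseteq> Lset V E u v"
proof
  fix x assume "x \<in> adjacency_separators V E u v"
  then have x: "x \<in> V" and sep: "x = u \<or> x = v \<or> ({u, x} \<in> E \<longleftrightarrow> {v, x} \<notin> E)"
    unfolding adjacency_separators_def by auto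
  have "gdist V E u x \<noteq> gdist V E v x"
    using sep gdist_eq_0_iff[OF G _ x] gdist_eq_1_iff[OF G _ x] uv by metis
  with x show "x \<in> Lset V E u v" unfolding Lset_def by simp
qed

text \<open>In diameter at most two the distances \<open>0, 1, 2\<close> are read off from equality and adjacency.\<close>

lemma Lset_subset_adjacency_separators:
  assumes G: "connected_graph V E" and diam: "\<And>x y. x \<in> V \<Longrightarrow> y \<in> V \<Longrightarrow> gdist V E x y \<le> 2"
    and uv: "u \<in> V" "v \<in> V"
  shows "Lset V E u v \<subseteq> adjacency_separators V E u v"
proof
  fix x assume "x \<in> Lset V E u v"
  then have x: "x \<in> V" and ne: "gdist V E u x \<noteq> gdist V E v x" unfolding Lset_def by auto
  have "gdist V E u x \<le> 2" "gdist V E v x \<le> 2" using diam uv x by auto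
  then have "x = u \<or> x = v \<or> ({u, x} \<in> E \<longleftrightarrow> {v, x} \<notin> E)"
    using ne gdist_eq_0_iff[OF G _ x] gdist_eq_1_iff[OF G _ x] uv
    by (metis One_nat_def le_Suc_eq numeral_2_eq_2 le_zero_eq)
  with x show "x \<in> adjacency_separators V E u v" unfolding adjacency_separators_def by simp
qed

lemma local_resolving_function_half:
  assumes G: "connected_graph V E"
  shows "local_resolving_function V E (\<lambda>_. 1/2)"
  unfolding local_resolving_function_def
proof (intro conjI allI impI ballI)
  fix u v assume e: "{u, v} \<in> E"
  have s: "simple_graph V E" using G unfolding connected_graph_def by simp
  note uv = simple_graph_edgeD[OF s e]
  have "{u, v} \<subseteq> adjacency_separators V E u v"
    using uv unfolding adjacency_separators_def by auto
  also have "\<dots> \<subseteq> Lset V E u v" using adjacency_separators_subset_Lset[OF G uv(2,3,1)] .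
  finally have sub: "{u, v} \<subseteq> Lset V E u v" .
  have "finite (Lset V E u v)" using connected_graph_finite[OF G] unfolding Lset_def by simp
  then have "(\<Sum>x\<in>{u, v}. 1/2) \<le> (\<Sum>x\<in>Lset V E u v. 1/2 :: real)"
    by (rule sum_mono2[OF _ sub]) simp
  then show "1 \<le> (\<Sum>x\<in>Lset V E u v. 1/2 :: real)" using uv(1) by simp
qed auto

lemma local_resolving_function_pullback:
  assumes f: "local_resolving_function V E f"
    and W: "finite W" "inj_on h W" "h ` W \<subseteq> V"
    and edges: "\<And>u v. {u, v} \<in> F \<Longrightarrow> {h u, h v} \<in> E \<and> Lset V E (h u) (h v) \<subseteq> h ` Lset W F u v"
  shows "local_resolving_function W F (f \<circ> h)"
  unfolding local_resolving_function_def
proof (intro conjI allI impI ballI)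
  fix x assume "x \<in> W"
  then show "0 \<le> (f \<circ> h) x" "(f \<circ> h) x \<le> 1"
    using W(3) f unfolding local_resolving_function_def by auto
next
  fix u v assume e: "{u, v} \<in> F"
  have LW: "Lset W F u v \<subseteq> W" unfolding Lset_def by blast
  have "1 \<le> (\<Sum>x\<in>Lset V E (h u) (h v). f x)"
    using f edges[OF e] unfolding local_resolving_function_def by blast
  also have "\<dots> \<le> (\<Sum>x\<in>h ` Lset W F u v. f x)"
  proof (rule sum_mono2)
    show "finite (h ` Lset W F u v)" using W(1) LW finite_subset by blast
    show "Lset V E (h u) (h v) \<subseteq> h ` Lset W F u v" using edges[OF e] by blast
    show "0 \<le> f x" if "x \<in> h ` Lset W F u v - Lset V E (h u) (h v)" for x
      using that LW W(3) f unfolding local_resolving_function_def by blast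
  qed
  also have "\<dots> = (\<Sum>x\<in>Lset W F u v. (f \<circ> h) x)"
    using sum.reindex[OF inj_on_subset[OF W(2) LW]] by simp
  finally show "1 \<le> (\<Sum>x\<in>Lset W F u v. (f \<circ> h) x)" .
qed

lemma ldim_f_le_sum:
  assumes "local_resolving_function V E f"
  shows "ldim_f V E \<le> (\<Sum>v\<in>V. f v)"
  unfolding ldim_f_def
proof (rule cInf_lower)
  show "(\<Sum>v\<in>V. f v) \<in> {(\<Sum>v\<in>V. f v) | f. local_resolving_function V E f}" using assms by blast
  show "bdd_below {(\<Sum>v\<in>V. f v) | f. local_resolving_function V E f}"
    by (rule bdd_belowI[of _ 0]) (auto simp: local_resolving_function_def intro: sum_nonneg)
qed

lemma in_ThetaD:
  assumes "in_Theta V E" "local_resolving_function V E f"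
  shows "real (card V) / 2 \<le> (\<Sum>v\<in>V. f v)"
  using assms ldim_f_le_sum unfolding in_Theta_def by metis

lemma in_ThetaI:
  assumes G: "connected_graph V E"
    and lower: "\<And>f. local_resolving_function V E f \<Longrightarrow> real (card V) / 2 \<le> (\<Sum>v\<in>V. f v)"
  shows "in_Theta V E"
proof -
  let ?S = "{(\<Sum>v\<in>V. f v) | f. local_resolving_function V E f}"
  have half: "real (card V) / 2 \<in> ?S"
    using local_resolving_function_half[OF G] by force
  have "Inf ?S = real (card V) / 2"
  proof (rule antisym)
    show "Inf ?S \<le> real (card V) / 2"
      by (rule cInf_lower[OF half], rule bdd_belowI[of _ "real (card V) / 2"]) (use lower in auto)
    show "real (card V) / 2 \<le> Inf ?S"
      by (rule cInf_greatest) (use half lower in auto)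
  qed
  with G show ?thesis unfolding in_Theta_def ldim_f_def by simp
qed

lemma Inl_in_join_V_iff [simp]: "Inl a \<in> join_V V1 V2 \<longleftrightarrow> a \<in> V1"
  and Inr_in_join_V_iff [simp]: "Inr b \<in> join_V V1 V2 \<longleftrightarrow> b \<in> V2"
  unfolding join_V_def by auto

lemma sum_join_V:
  assumes "finite V1" "finite V2"
  shows "(\<Sum>v\<in>join_V V1 V2. g v) = (\<Sum>a\<in>V1. g (Inl a)) + (\<Sum>b\<in>V2. g (Inr b))"
  unfolding join_V_def using assms by (subst sum.union_disjoint) (auto simp: sum.reindex)

lemma card_join_V:
  assumes "finite V1" "finite V2"
  shows "card (join_V V1 V2) = card V1 + card V2"
  using sum_join_V[OF assms, of "\<lambda>_. 1 :: nat"] by simp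

lemma Inl_edge_in_join_E_iff: "{Inl a, Inl b} \<in> join_E V1 E1 V2 E2 \<longleftrightarrow> {a, b} \<in> E1"
proof -
  have "inj (image Inl)" by (simp add: inj_def inj_image_eq_iff)
  then have "Inl ` {a, b} \<in> image Inl ` E1 \<longleftrightarrow> {a, b} \<in> E1" by (rule inj_image_mem_iff)
  moreover have "Inl ` {a, b} \<notin> image Inr ` E2" by auto
  ultimately show ?thesis unfolding join_E_def by auto
qed

lemma Inr_edge_in_join_E_iff: "{Inr a, Inr b} \<in> join_E V1 E1 V2 E2 \<longleftrightarrow> {a, b} \<in> E2"
proof -
  have "inj (image Inr)" by (simp add: inj_def inj_image_eq_iff)
  then have "Inr ` {a, b} \<in> image Inr ` E2 \<longleftrightarrow> {a, b} \<in> E2" by (rule inj_image_mem_iff)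
  moreover have "Inr ` {a, b} \<notin> image Inl ` E1" by auto
  ultimately show ?thesis unfolding join_E_def by auto
qed

lemma cross_edge_in_join_E:
  "a \<in> V1 \<Longrightarrow> b \<in> V2 \<Longrightarrow> {Inl a, Inr b} \<in> join_E V1 E1 V2 E2"
  "a \<in> V1 \<Longrightarrow> b \<in> V2 \<Longrightarrow> {Inr b, Inl a} \<in> join_E V1 E1 V2 E2"
  unfolding join_E_def by auto

lemma join_walk_length_le_3:
  assumes "V1 \<noteq> {}" "V2 \<noteq> {}" "p \<in> join_V V1 V2" "q \<in> join_V V1 V2"
  obtains xs where "is_walk (join_V V1 V2) (join_E V1 E1 V2 E2) xs" "hd xs = p" "last xs = q"
    "length xs \<le> 3"
proof -
  obtain c1 c2 where c: "c1 \<in> V1" "c2 \<in> V2" using assms(1,2) by blast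
  have "\<exists>xs. is_walk (join_V V1 V2) (join_E V1 E1 V2 E2) xs \<and> hd xs = p \<and> last xs = q
      \<and> length xs \<le> 3"
  proof (cases p; cases q)
    fix a b assume "p = Inl a" "q = Inl b"
    then show ?thesis using assms c
      by (intro exI[of _ "[p, Inr c2, q]"]) (auto simp: is_walk_triple_iff cross_edge_in_join_E)
  next
    fix a b assume "p = Inl a" "q = Inr b"
    then show ?thesis using assms
      by (intro exI[of _ "[p, q]"]) (auto simp: is_walk_pair_iff cross_edge_in_join_E)
  next
    fix a b assume "p = Inr a" "q = Inl b"
    then show ?thesis using assms
      by (intro exI[of _ "[p, q]"]) (auto simp: is_walk_pair_iff cross_edge_in_join_E)
  next
    fix a b assume "p = Inr a" "q = Inr b"
    then show ?thesis using assms c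
      by (intro exI[of _ "[p, Inl c1, q]"]) (auto simp: is_walk_triple_iff cross_edge_in_join_E)
  qed
  then show thesis using that by blast
qed

lemma gdist_join_le_2:
  assumes "V1 \<noteq> {}" "V2 \<noteq> {}" "p \<in> join_V V1 V2" "q \<in> join_V V1 V2"
  shows "gdist (join_V V1 V2) (join_E V1 E1 V2 E2) p q \<le> 2"
proof -
  obtain xs where "is_walk (join_V V1 V2) (join_E V1 E1 V2 E2) xs" "hd xs = p" "last xs = q"
    "length xs \<le> 3"
    using join_walk_length_le_3[OF assms] by metis
  then show ?thesis using gdist_le_walk_length[of _ _ xs p q] by fastforce
qed

lemma simple_graph_join:
  assumes G1: "simple_graph V1 E1" and G2: "simple_graph V2 E2"
  shows "simple_graph (join_V V1 V2) (join_E V1 E1 V2 E2)"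
  unfolding simple_graph_def
proof (intro conjI ballI)
  show "finite (join_V V1 V2)" "join_V V1 V2 \<noteq> {}"
    using G1 G2 unfolding simple_graph_def join_V_def by auto
  fix e assume "e \<in> join_E V1 E1 V2 E2"
  then consider e' where "e' \<in> E1" "e = Inl ` e'" | e' where "e' \<in> E2" "e = Inr ` e'"
    | a b where "a \<in> V1" "b \<in> V2" "e = {Inl a, Inr b}"
    unfolding join_E_def by blast
  then show "\<exists>u v. u \<noteq> v \<and> u \<in> join_V V1 V2 \<and> v \<in> join_V V1 V2 \<and> e = {u, v}"
  proof cases
    case 1
    then obtain u v where "u \<noteq> v" "u \<in> V1" "v \<in> V1" "e' = {u, v}"
      using G1 unfolding simple_graph_def by blast
    with 1 show ?thesis by (intro exI[of _ "Inl u"] exI[of _ "Inl v"]) auto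
  next
    case 2
    then obtain u v where "u \<noteq> v" "u \<in> V2" "v \<in> V2" "e' = {u, v}"
      using G2 unfolding simple_graph_def by blast
    with 2 show ?thesis by (intro exI[of _ "Inr u"] exI[of _ "Inr v"]) auto
  next
    case 3
    then show ?thesis by (intro exI[of _ "Inl a"] exI[of _ "Inr b"]) auto
  qed
qed

lemma connected_graph_join:
  assumes "connected_graph V1 E1" "connected_graph V2 E2"
  shows "connected_graph (join_V V1 V2) (join_E V1 E1 V2 E2)"
proof -
  have "simple_graph V1 E1" "simple_graph V2 E2"
    using assms unfolding connected_graph_def by simp_all
  moreover then have "V1 \<noteq> {}" "V2 \<noteq> {}" unfolding simple_graph_def by simp_all
  ultimately show ?thesis
    unfolding connected_graph_def
    by (metis simple_graph_join join_walk_length_le_3)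
qed

lemma Lset_join_Inl_subset:
  assumes G1: "connected_graph V1 E1" and G2: "connected_graph V2 E2" and e: "{u, v} \<in> E1"
  shows "Lset (join_V V1 V2) (join_E V1 E1 V2 E2) (Inl u) (Inl v) \<subseteq> Inl ` Lset V1 E1 u v"
proof
  have uv: "u \<noteq> v" "u \<in> V1" "v \<in> V1"
    using simple_graph_edgeD e G1 unfolding connected_graph_def by metis+
  have nonempty: "V1 \<noteq> {}" "V2 \<noteq> {}" using G1 G2 unfolding connected_graph_def simple_graph_def by simp_all
  fix x assume "x \<in> Lset (join_V V1 V2) (join_E V1 E1 V2 E2) (Inl u) (Inl v)"
  moreover have "Lset (join_V V1 V2) (join_E V1 E1 V2 E2) (Inl u) (Inl v)
      \<subseteq> adjacency_separators (join_V V1 V2) (join_E V1 E1 V2 E2) (Inl u) (Inl v)"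
    by (rule Lset_subset_adjacency_separators[OF connected_graph_join[OF G1 G2]
        gdist_join_le_2[OF nonempty]]) (use uv in simp_all)
  ultimately have "x \<in> adjacency_separators (join_V V1 V2) (join_E V1 E1 V2 E2) (Inl u) (Inl v)"
    by blast
  then show "x \<in> Inl ` Lset V1 E1 u v"
  proof (cases x)
    case (Inl c)
    with \<open>x \<in> adjacency_separators _ _ _ _\<close> have "c \<in> adjacency_separators V1 E1 u v"
      unfolding adjacency_separators_def by (simp add: Inl_edge_in_join_E_iff)
    with Inl show ?thesis using adjacency_separators_subset_Lset[OF G1 uv(2,3,1)] by blast
  next
    case (Inr c)
    with \<open>x \<in> adjacency_separators _ _ _ _\<close> uv show ?thesis
      unfolding adjacency_separators_def by (auto simp: cross_edge_in_join_E)
  qed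
qed

lemma Lset_join_Inr_subset:
  assumes G1: "connected_graph V1 E1" and G2: "connected_graph V2 E2" and e: "{u, v} \<in> E2"
  shows "Lset (join_V V1 V2) (join_E V1 E1 V2 E2) (Inr u) (Inr v) \<subseteq> Inr ` Lset V2 E2 u v"
proof
  have uv: "u \<noteq> v" "u \<in> V2" "v \<in> V2"
    using simple_graph_edgeD e G2 unfolding connected_graph_def by metis+
  have nonempty: "V1 \<noteq> {}" "V2 \<noteq> {}" using G1 G2 unfolding connected_graph_def simple_graph_def by simp_all
  fix x assume "x \<in> Lset (join_V V1 V2) (join_E V1 E1 V2 E2) (Inr u) (Inr v)"
  moreover have "Lset (join_V V1 V2) (join_E V1 E1 V2 E2) (Inr u) (Inr v)
      \<subseteq> adjacency_separators (join_V V1 V2) (join_E V1 E1 V2 E2) (Inr u) (Inr v)"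
    by (rule Lset_subset_adjacency_separators[OF connected_graph_join[OF G1 G2]
        gdist_join_le_2[OF nonempty]]) (use uv in simp_all)
  ultimately have "x \<in> adjacency_separators (join_V V1 V2) (join_E V1 E1 V2 E2) (Inr u) (Inr v)"
    by blast
  then show "x \<in> Inr ` Lset V2 E2 u v"
  proof (cases x)
    case (Inr c)
    with \<open>x \<in> adjacency_separators _ _ _ _\<close> have "c \<in> adjacency_separators V2 E2 u v"
      unfolding adjacency_separators_def by (simp add: Inr_edge_in_join_E_iff)
    with Inr show ?thesis using adjacency_separators_subset_Lset[OF G2 uv(2,3,1)] by blast
  next
    case (Inl c)
    with \<open>x \<in> adjacency_separators _ _ _ _\<close> uv show ?thesis
      unfolding adjacency_separators_def by (auto simp: cross_edge_in_join_E)
  qed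
qed

theorem corollary2p4:
  fixes V1 :: "'a set" and E1 :: "'a set set" and V2 :: "'b set" and E2 :: "'b set set"
  assumes "in_Theta V1 E1" and "in_Theta V2 E2"
  shows "in_Theta (join_V V1 V2) (join_E V1 E1 V2 E2)"
proof (rule in_ThetaI)
  have G1: "connected_graph V1 E1" and G2: "connected_graph V2 E2"
    using assms unfolding in_Theta_def by simp_all
  have fin: "finite V1" "finite V2" using G1 G2 by (simp_all add: connected_graph_finite)
  show "connected_graph (join_V V1 V2) (join_E V1 E1 V2 E2)" using connected_graph_join[OF G1 G2] .
  fix f assume f: "local_resolving_function (join_V V1 V2) (join_E V1 E1 V2 E2) f"
  have "local_resolving_function V1 E1 (f \<circ> Inl)"
    by (rule local_resolving_function_pullback[OF f fin(1)])
      (auto simp: Inl_edge_in_join_E_iff Lset_join_Inl_subset[OF G1 G2])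
  from in_ThetaD[OF assms(1) this]
  have "real (card V1) / 2 \<le> (\<Sum>a\<in>V1. f (Inl a))" by (simp add: comp_def)
  moreover have "local_resolving_function V2 E2 (f \<circ> Inr)"
    by (rule local_resolving_function_pullback[OF f fin(2)])
      (auto simp: Inr_edge_in_join_E_iff Lset_join_Inr_subset[OF G1 G2])
  from in_ThetaD[OF assms(2) this]
  have "real (card V2) / 2 \<le> (\<Sum>b\<in>V2. f (Inr b))" by (simp add: comp_def)
  ultimately show "real (card (join_V V1 V2)) / 2 \<le> (\<Sum>v\<in>join_V V1 V2. f v)"
    by (simp add: sum_join_V[OF fin] card_join_V[OF fin])
qed

end
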